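(* Let $d\ge1$, $t\in\mathbb R$, $\epsilon\ge0$, and let $\Phi=(\phi_0,\dots,\phi_d)\in\mathbb R^{d+1}$ satisfy $\max_{x\in[-1,1]}|P(x,\Phi)-s_t(x)|\le\epsilon$. For an integer $r\ge1$ define the concatenated phase sequence $$\Phi^{(r)}:=\big(\phi_0,\phi_1,\dots,\phi_{d-1},\underbrace{\phi_d+\phi_0,\phi_1,\dots,\phi_{d-1}}_{\text{repeated } r-1\text{ times}},\phi_d\big)\in\mathbb R^{rd+1}.$$ Then $\max_{x\in[-1,1]}|P(x,\Phi^{(r)})-s_{rt}(x)|\le r^2\epsilon$.
   Context: For phases $\Phi=(\phi_0,\dots,\phi_D)\in\mathbb R^{D+1}$ and $x\in[-1,1]$, let $W(x):=\begin{pmatrix}x& i\sqrt{1-x^2}\\ i\sqrt{1-x^2}&x\end{pmatrix}$, $Z=\mathrm{diag}(1,-1)$, $U(x,\Phi):=e^{i\phi_0Z}\prod_{j=1}^D\big[W(x)e^{i\phi_jZ}\big]$, and $P(x,\Phi):=\langle0|U(x,\Phi)|0\rangle$ (the upper-left entry). Also $s_t(x):=e^{-itx^2}$. *)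

theory Defs
  imports "HOL-Analysis.Analysis"
begin

type_synonym cmat2 = "complex ^ 2 ^ 2"

definition mat2 :: "complex \<Rightarrow> complex \<Rightarrow> complex \<Rightarrow> complex \<Rightarrow> cmat2" where
  "mat2 a b c d = (\<chi> i j. if i = 1 then (if j = 1 then a else b) else (if j = 1 then c else d))"

definition Wsig :: "real \<Rightarrow> cmat2" where
  "Wsig x = mat2 (complex_of_real x) (\<i> * complex_of_real (sqrt (1 - x\<^sup>2)))
                  (\<i> * complex_of_real (sqrt (1 - x\<^sup>2))) (complex_of_real x)"

text \<open>e^{i phi Z} with Z = diag(1,-1).\<close>
definition expZ :: "real \<Rightarrow> cmat2" where
  "expZ phi = mat2 (cis phi) 0 0 (cis (- phi))"

text \<open>Phase list [phi_0, ..., phi_D];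
  U(x,Phi) = e^{i phi_0 Z} * prod_{j=1}^D (W(x) e^{i phi_j Z}).\<close>
definition Uqsp :: "real \<Rightarrow> real list \<Rightarrow> cmat2" where
  "Uqsp x Phi = expZ (hd Phi) ** foldr (\<lambda>phi M. (Wsig x ** expZ phi) ** M) (tl Phi) (mat 1)"

definition Pqsp :: "real \<Rightarrow> real list \<Rightarrow> complex" where
  "Pqsp x Phi = Uqsp x Phi $ 1 $ 1"

definition s_t :: "real \<Rightarrow> real \<Rightarrow> complex" where
  "s_t t x = exp (- \<i> * complex_of_real (t * x\<^sup>2))"

definition concat_phases :: "nat \<Rightarrow> real list \<Rightarrow> real list" where
  "concat_phases r Phi =
     (let mid = butlast (tl Phi); p0 = hd Phi; pd = last Phi in
      p0 # mid @ concat (replicate (r - 1) ((pd + p0) # mid)) @ [pd])"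

end

theory Submission imports Defs begin

(* The phases of Phi^(r) are arranged so that the two Z-rotations e^{i phi_d Z} e^{i phi_0 Z}
   at each junction merge into e^{i (phi_d + phi_0) Z}; hence U(x, Phi^(r)) = U(x, Phi)^r.
   U(x, Phi) lies in SU(2), i.e. has the shape [[a, b], [-cnj b, cnj a]] with |a|^2 + |b|^2 = 1.
   If |a - s| <= eps for a unimodular s, then |a| >= 1 - eps and so |b|^2 <= 2 eps.
   Writing a_k, b_k for the first row of U^k, a_{k+1} = a a_k - b cnj b_k and |b_k| <= k |b|, so
   |a_{k+1} - s^{k+1}| <= |a_k - s^k| + eps + 2 k eps, which sums to (k+1)^2 eps.
   Finally s_t(x)^r = s_{rt}(x). *)

lemma mat2_mult:
  "mat2 a b c d ** mat2 e f g h = mat2 (a*e + b*g) (a*f + b*h) (c*e + d*g) (c*f + d*h)"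
  by (simp add: matrix_matrix_mult_def mat2_def vec_eq_iff forall_2 sum_2)

lemma mat_1_eq_mat2: "(mat 1 :: cmat2) = mat2 1 0 0 1"
  by (simp add: mat_def mat2_def vec_eq_iff forall_2)

lemma mat2_nth_11 [simp]: "mat2 a b c d $ 1 $ 1 = a"
  by (simp add: mat2_def)

lemma expZ_add: "expZ (p + q) = expZ p ** expZ q"
  by (simp add: expZ_def mat2_mult cis_mult)

subsection \<open>The group SU(2)\<close>

definition su2 :: "cmat2 \<Rightarrow> bool" where
  "su2 M \<longleftrightarrow> (\<exists>a b. M = mat2 a b (- cnj b) (cnj a) \<and> a * cnj a + b * cnj b = 1)"

lemma su2_mult:
  assumes "su2 M" "su2 N"
  shows "su2 (M ** N)"
proof -
  obtain a b where M: "M = mat2 a b (- cnj b) (cnj a)" "a * cnj a + b * cnj b = 1"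
    using assms(1) su2_def by auto
  obtain c d where N: "N = mat2 c d (- cnj d) (cnj c)" "c * cnj c + d * cnj d = 1"
    using assms(2) su2_def by auto
  have "(a*c - b*cnj d) * cnj (a*c - b*cnj d) + (a*d + b*cnj c) * cnj (a*d + b*cnj c)
      = (a * cnj a + b * cnj b) * (c * cnj c + d * cnj d)"
    by (simp add: algebra_simps)
  with M N show ?thesis
    unfolding su2_def
    by (intro exI[of _ "a*c - b*cnj d"] exI[of _ "a*d + b*cnj c"]) (simp add: mat2_mult algebra_simps)
qed

lemma su2_mat_1: "su2 (mat 1)"
  unfolding su2_def mat_1_eq_mat2 by (intro exI[of _ 1] exI[of _ 0]) simp

lemma su2_expZ: "su2 (expZ p)"
  unfolding su2_def expZ_def by (intro exI[of _ "cis p"] exI[of _ 0]) (simp add: cis_cnj cis_mult)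

lemma su2_Wsig:
  assumes "x \<in> {-1..1}"
  shows "su2 (Wsig x)"
proof -
  have "x\<^sup>2 \<le> 1"
    using assms by (simp add: abs_square_le_1 abs_le_iff)
  then have "complex_of_real x * cnj (complex_of_real x)
      + \<i> * complex_of_real (sqrt (1 - x\<^sup>2)) * cnj (\<i> * complex_of_real (sqrt (1 - x\<^sup>2))) = 1"
    by (simp add: power2_eq_square[symmetric] flip: of_real_mult of_real_power of_real_add)
      (simp add: power_mult_distrib flip: of_real_power)
  then show ?thesis
    unfolding su2_def Wsig_def
    by (intro exI[of _ "complex_of_real x"] exI[of _ "\<i> * complex_of_real (sqrt (1 - x\<^sup>2))"]) simp
qed

lemma su2_normsq:
  assumes "a * cnj a + b * cnj b = 1"
  shows "cmod a ^ 2 + cmod b ^ 2 = 1"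
proof -
  have "complex_of_real (cmod a ^ 2 + cmod b ^ 2) = a * cnj a + b * cnj b"
    by (simp only: of_real_add complex_norm_square)
  with assms show ?thesis
    using of_real_eq_1_iff by metis
qed

lemma normsq_sum_eq_1_imp_le_1:
  fixes a b :: complex
  assumes "cmod a ^ 2 + cmod b ^ 2 = 1"
  shows "cmod a \<le> 1"
  using assms by (metis abs_norm_cancel abs_square_le_1 le_add_same_cancel1 zero_le_power2)

primrec matpow :: "cmat2 \<Rightarrow> nat \<Rightarrow> cmat2" where
  "matpow M 0 = mat 1"
| "matpow M (Suc n) = M ** matpow M n"

lemma matpow_rotate: "A ** matpow (B ** A) n ** B = matpow (A ** B) (Suc n)"
proof (induction n)
  case 0
  then show ?case by (simp add: matrix_mul_lid matrix_mul_rid)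
next
  case (Suc n)
  have "A ** matpow (B ** A) (Suc n) ** B = (A ** B) ** (A ** matpow (B ** A) n ** B)"
    by (simp add: matrix_mul_assoc)
  also have "\<dots> = matpow (A ** B) (Suc (Suc n))"
    using Suc by simp
  finally show ?case .
qed

subsection \<open>The QSP product and concatenated phases\<close>

definition Wprod :: "real \<Rightarrow> real list \<Rightarrow> cmat2" where
  "Wprod x l = foldr (\<lambda>phi M. (Wsig x ** expZ phi) ** M) l (mat 1)"

lemma foldr_eq_Wprod: "foldr (\<lambda>phi M. (Wsig x ** expZ phi) ** M) l M = Wprod x l ** M"
  unfolding Wprod_def by (induction l) (auto simp: matrix_mul_assoc matrix_mul_lid)

lemma Uqsp_eq_Wprod: "Uqsp x Phi = expZ (hd Phi) ** Wprod x (tl Phi)"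
  by (simp add: Uqsp_def Wprod_def)

lemma Wprod_Nil: "Wprod x [] = mat 1"
  by (simp add: Wprod_def)

lemma Wprod_Cons: "Wprod x (p # l) = (Wsig x ** expZ p) ** Wprod x l"
  by (simp add: Wprod_def)

lemma Wprod_append: "Wprod x (xs @ ys) = Wprod x xs ** Wprod x ys"
  unfolding Wprod_def[of x "xs @ ys"] foldr_append by (simp add: foldr_eq_Wprod matrix_mul_rid)

lemma Wprod_concat_replicate: "Wprod x (concat (replicate n l)) = matpow (Wprod x l) n"
  by (induction n) (simp_all add: Wprod_Nil Wprod_append)

lemma su2_Wprod: "x \<in> {-1..1} \<Longrightarrow> su2 (Wprod x l)"
  by (induction l) (auto simp: Wprod_Nil Wprod_Cons su2_mat_1 su2_mult su2_Wsig su2_expZ)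

lemma su2_Uqsp: "x \<in> {-1..1} \<Longrightarrow> su2 (Uqsp x Phi)"
  by (simp add: Uqsp_eq_Wprod su2_mult su2_expZ su2_Wprod)

lemma list_two_ends:
  assumes "length l \<ge> 2"
  obtains p0 mid pd where "l = p0 # mid @ [pd]"
proof -
  obtain p0 rest where l: "l = p0 # rest"
    using assms by (cases l) auto
  with assms have "rest \<noteq> []"
    by auto
  then obtain mid pd where "rest = mid @ [pd]"
    by (metis rev_exhaust)
  with l show ?thesis
    using that by blast
qed

lemma concat_phases_split:
  assumes "Phi = p0 # mid @ [pd]"
  shows "concat_phases r Phi = p0 # mid @ concat (replicate (r - 1) ((pd + p0) # mid)) @ [pd]"
  using assms by (simp add: concat_phases_def)

lemma length_concat_phases:
  assumes "length Phi = d + 1" "d \<ge> 1" "r \<ge> 1"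
  shows "length (concat_phases r Phi) = r * d + 1"
proof -
  obtain p0 mid pd where Phi: "Phi = p0 # mid @ [pd]"
    using assms(1,2) list_two_ends[of Phi] by auto
  have "length mid = d - 1"
    using assms(1) Phi by simp
  then show ?thesis
    using assms(2,3) by (cases r) (simp_all add: concat_phases_split[OF Phi] length_concat
        sum_list_replicate algebra_simps)
qed

lemma Uqsp_concat_phases:
  assumes "length Phi \<ge> 2" "r \<ge> 1"
  shows "Uqsp x (concat_phases r Phi) = matpow (Uqsp x Phi) r"
proof -
  obtain p0 mid pd where Phi: "Phi = p0 # mid @ [pd]"
    using assms(1) list_two_ends by blast
  define A where "A = expZ p0 ** Wprod x mid"
  define B where "B = Wsig x ** expZ pd"
  have last: "Wprod x [pd] = B"
    by (simp add: Wprod_Cons Wprod_Nil B_def matrix_mul_rid)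
  have junction: "Wprod x ((pd + p0) # mid) = B ** A"
    by (simp add: Wprod_Cons A_def B_def expZ_add matrix_mul_assoc)
  have "Uqsp x (concat_phases r Phi) = A ** matpow (B ** A) (r - 1) ** B"
    by (simp add: concat_phases_split[OF Phi] Uqsp_eq_Wprod Wprod_append Wprod_concat_replicate
        junction last A_def matrix_mul_assoc)
  also have "\<dots> = matpow (A ** B) r"
    using matpow_rotate assms(2) by (metis Suc_diff_1 less_eq_Suc_le One_nat_def)
  also have "A ** B = Uqsp x Phi"
    by (simp add: Phi Uqsp_eq_Wprod Wprod_append last A_def matrix_mul_assoc)
  finally show ?thesis .
qed

subsection \<open>Powers of an SU(2) matrix close to a phase\<close>

lemma su2_offdiag_normsq_le:
  assumes "cmod a ^ 2 + cmod b ^ 2 = 1" "cmod s = 1" "cmod (a - s) \<le> e"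
  shows "cmod b ^ 2 \<le> 2 * e"
proof -
  have a1: "cmod a \<le> 1"
    using normsq_sum_eq_1_imp_le_1 assms(1) .
  have "1 \<le> cmod a + cmod (s - a)"
    using assms(2) norm_triangle_ineq[of a "s - a"] by simp
  then have "1 - cmod a \<le> e"
    using assms(3) by (simp add: norm_minus_commute)
  moreover have "cmod b ^ 2 = (1 - cmod a) * (1 + cmod a)"
    using assms(1) by (simp add: algebra_simps power2_eq_square)
  moreover have "0 \<le> 1 - cmod a" "0 \<le> 1 + cmod a" "1 + cmod a \<le> 2"
    using a1 by auto
  ultimately show ?thesis
    by (metis mult.commute mult_mono' order.trans)
qed

lemma su2_power_offdiag_step:
  assumes "cmod a \<le> 1" "cmod ak \<le> 1" "cmod bk \<le> real k * cmod b"
  shows "cmod (a * bk + b * cnj ak) \<le> real (Suc k) * cmod b"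
proof -
  have "cmod (a * bk + b * cnj ak) \<le> cmod a * cmod bk + cmod b * cmod ak"
    by (metis norm_triangle_ineq norm_mult complex_mod_cnj)
  also have "\<dots> \<le> cmod bk + cmod b"
    using assms(1,2) by (smt (verit) mult_left_le_one_le mult_right_le_one_le norm_ge_zero)
  also have "\<dots> \<le> real (Suc k) * cmod b"
    using assms(3) by (simp add: algebra_simps)
  finally show ?thesis .
qed

lemma su2_power_corner_step:
  assumes "cmod a \<le> 1" "cmod s = 1" "cmod (a - s) \<le> e" "cmod b ^ 2 \<le> 2 * e"
    and "cmod bk \<le> real k * cmod b" "cmod (ak - s ^ k) \<le> (real k)\<^sup>2 * e"
  shows "cmod (a * ak - b * cnj bk - s ^ Suc k) \<le> (real (Suc k))\<^sup>2 * e"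
proof -
  have "a * ak - b * cnj bk - s ^ Suc k = a * (ak - s ^ k) + s ^ k * (a - s) - b * cnj bk"
    by (simp add: algebra_simps)
  then have "cmod (a * ak - b * cnj bk - s ^ Suc k)
      \<le> cmod (a * (ak - s ^ k) + s ^ k * (a - s)) + cmod (b * cnj bk)"
    by (simp only: norm_triangle_ineq4)
  also have "\<dots> \<le> cmod (a * (ak - s ^ k)) + cmod (s ^ k * (a - s)) + cmod (b * cnj bk)"
    using norm_triangle_ineq by simp
  also have "\<dots> = cmod a * cmod (ak - s ^ k) + cmod (a - s) + cmod b * cmod bk"
    using assms(2) by (simp add: norm_mult norm_power)
  also have "\<dots> \<le> (real k)\<^sup>2 * e + e + real k * (2 * e)"
  proof -
    have "cmod a * cmod (ak - s ^ k) \<le> (real k)\<^sup>2 * e"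
      using assms(1,6) by (smt (verit) mult_left_le_one_le norm_ge_zero)
    moreover have "cmod b * cmod bk \<le> real k * cmod b ^ 2"
      using mult_left_mono[OF assms(5), of "cmod b"] by (simp add: power2_eq_square algebra_simps)
    moreover have "real k * cmod b ^ 2 \<le> real k * (2 * e)"
      using assms(4) by (simp add: mult_left_mono)
    ultimately show ?thesis
      using assms(3) by linarith
  qed
  also have "\<dots> = (real (Suc k))\<^sup>2 * e"
    by (simp add: power2_eq_square algebra_simps)
  finally show ?thesis .
qed

lemma su2_matpow_corner_deviation:
  assumes "su2 U" "cmod s = 1" "cmod (U $ 1 $ 1 - s) \<le> e"
  shows "cmod (matpow U k $ 1 $ 1 - s ^ k) \<le> (real k)\<^sup>2 * e"
proof -
  obtain a b where U: "U = mat2 a b (- cnj b) (cnj a)" "a * cnj a + b * cnj b = 1"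
    using assms(1) su2_def by blast
  have a1: "cmod a \<le> 1" and close: "cmod (a - s) \<le> e"
    using normsq_sum_eq_1_imp_le_1 su2_normsq[OF U(2)] assms(3) U(1) by auto
  have b2: "cmod b ^ 2 \<le> 2 * e"
    using su2_offdiag_normsq_le[OF su2_normsq[OF U(2)] assms(2) close] .
  have "\<exists>ak bk. matpow U k = mat2 ak bk (- cnj bk) (cnj ak) \<and> ak * cnj ak + bk * cnj bk = 1
      \<and> cmod bk \<le> real k * cmod b \<and> cmod (ak - s ^ k) \<le> (real k)\<^sup>2 * e"
  proof (induction k)
    case 0
    show ?case by (intro exI[of _ 1] exI[of _ 0]) (simp add: mat_1_eq_mat2)
  next
    case (Suc k)
    then obtain ak bk where K: "matpow U k = mat2 ak bk (- cnj bk) (cnj ak)"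
      "ak * cnj ak + bk * cnj bk = 1" "cmod bk \<le> real k * cmod b" "cmod (ak - s ^ k) \<le> (real k)\<^sup>2 * e"
      by blast
    define c where "c = a * ak - b * cnj bk"
    define d where "d = a * bk + b * cnj ak"
    have "matpow U (Suc k) = mat2 c d (- cnj d) (cnj c)"
      using K(1) U(1) by (simp add: mat2_mult c_def d_def algebra_simps)
    moreover have "c * cnj c + d * cnj d = (a * cnj a + b * cnj b) * (ak * cnj ak + bk * cnj bk)"
      by (simp add: c_def d_def algebra_simps)
    moreover have "cmod d \<le> real (Suc k) * cmod b"
      unfolding d_def
      using su2_power_offdiag_step a1 normsq_sum_eq_1_imp_le_1[OF su2_normsq[OF K(2)]] K(3) .
    moreover have "cmod (c - s ^ Suc k) \<le> (real (Suc k))\<^sup>2 * e"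
      unfolding c_def using su2_power_corner_step[OF a1 assms(2) close b2 K(3,4)] .
    ultimately show ?case
      using U(2) K(2) by (intro exI[of _ c] exI[of _ d]) simp
  qed
  then show ?thesis by auto
qed

lemma norm_s_t [simp]: "cmod (s_t t x) = 1"
  unfolding s_t_def by (simp add: norm_exp_eq_Re)

lemma s_t_power: "s_t t x ^ r = s_t (real r * t) x"
  unfolding s_t_def by (simp flip: exp_of_nat_mult add: algebra_simps)

theorem mainTheorem7:
  fixes d r :: nat and t \<epsilon> :: real and Phi :: "real list"
  assumes "d \<ge> 1" and "\<epsilon> \<ge> 0" and "length Phi = d + 1"
    and "\<forall>x\<in>{-1..1::real}. cmod (Pqsp x Phi - s_t t x) \<le> \<epsilon>"
    and "r \<ge> 1"
  shows "length (concat_phases r Phi) = r * d + 1 \<and>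
         (\<forall>x\<in>{-1..1::real}. cmod (Pqsp x (concat_phases r Phi) - s_t (real r * t) x)
              \<le> (real r)\<^sup>2 * \<epsilon>)"
proof (intro conjI ballI)
  show "length (concat_phases r Phi) = r * d + 1"
    using length_concat_phases[OF assms(3,1,5)] .
next
  fix x :: real
  assume x: "x \<in> {-1..1}"
  have "length Phi \<ge> 2"
    using assms(1,3) by simp
  then have "Pqsp x (concat_phases r Phi) = matpow (Uqsp x Phi) r $ 1 $ 1"
    using Uqsp_concat_phases assms(5) by (simp add: Pqsp_def)
  moreover have "cmod (matpow (Uqsp x Phi) r $ 1 $ 1 - s_t t x ^ r) \<le> (real r)\<^sup>2 * \<epsilon>"
    using su2_matpow_corner_deviation[OF su2_Uqsp[OF x] norm_s_t] assms(4) x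
    by (simp add: Pqsp_def)
  ultimately show "cmod (Pqsp x (concat_phases r Phi) - s_t (real r * t) x) \<le> (real r)\<^sup>2 * \<epsilon>"
    by (simp add: s_t_power)
qed

end
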